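(* Let $k$ be a positive integer. Then there exists a polynomial map $f:\mathbb{C}^2\to\mathbb{C}^2$ with $\mu_f=k+1$ such that $\mathbb{C}^2\setminus f(\mathbb{C}^2)$ has at least one isolated point.
   Context: For a dominant polynomial map $f$ (i.e. $f(\mathbb{C}^2)$ dense in $\mathbb{C}^2$), $\mu_f$ is the number of preimages of a generic point of $\mathbb{C}^2$. *)

theory Defs
  imports "HOL-Analysis.Analysis"
begin

definition poly_fun2 :: "(complex \<times> complex \<Rightarrow> complex) \<Rightarrow> bool" where
  "poly_fun2 g \<longleftrightarrow> (\<exists>(N::nat) (c::nat \<Rightarrow> nat \<Rightarrow> complex).
      \<forall>x y. g (x, y) = (\<Sum>i\<le>N. \<Sum>j\<le>N. c i j * x ^ i * y ^ j))"

definition poly_map2 :: "(complex \<times> complex \<Rightarrow> complex \<times> complex) \<Rightarrow> bool" where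
  "poly_map2 f \<longleftrightarrow> poly_fun2 (\<lambda>p. fst (f p)) \<and> poly_fun2 (\<lambda>p. snd (f p))"

definition dominant2 :: "(complex \<times> complex \<Rightarrow> complex \<times> complex) \<Rightarrow> bool" where
  "dominant2 f \<longleftrightarrow> closure (range f) = UNIV"

text \<open>mu_f = m: a generic point (i.e. every point outside the zero set of some
  nonzero polynomial) has exactly m preimages.\<close>
definition generic_fiber_card :: "(complex \<times> complex \<Rightarrow> complex \<times> complex) \<Rightarrow> nat \<Rightarrow> bool" where
  "generic_fiber_card f m \<longleftrightarrow> (\<exists>h. poly_fun2 h \<and> h \<noteq> (\<lambda>_. 0) \<and>
      (\<forall>p. h p \<noteq> 0 \<longrightarrow> finite (f -` {p}) \<and> card (f -` {p}) = m))"

end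

theory Submission
  imports Defs "HOL-Computational_Algebra.Fundamental_Theorem_Algebra"
begin

text \<open>Take \<open>f(x, y) = (xy, x\<^sup>k + (xy - 1) y)\<close>. Over a point \<open>(u, v)\<close> with \<open>u \<noteq> 0\<close>, the
  substitution \<open>y = u / x\<close> identifies the fibre with the nonzero roots of the trinomial
  \<open>t\<^sup>k\<^sup>+\<^sup>1 - v t + u (u - 1)\<close>. Such a root exists unless \<open>(u, v) = (1, 0)\<close>, and the points
  \<open>(0, v)\<close> are hit by \<open>(0, -v)\<close>, so the image of \<open>f\<close> is \<open>\<complex>\<^sup>2\<close> minus the single point \<open>(1, 0)\<close>.
  Away from \<open>u (u - 1) = 0\<close> and the zero set of the discriminant of the trinomial, the roots
  are simple and nonzero, so the generic fibre has \<open>k + 1\<close> points.\<close>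

text \<open>\<open>Q\<close> is read as a polynomial in \<open>y\<close> whose coefficients are polynomials in \<open>x\<close>.\<close>
definition poly2 :: "'a::comm_semiring_1 poly poly \<Rightarrow> 'a \<times> 'a \<Rightarrow> 'a" where
  "poly2 Q = (\<lambda>(x, y). poly (poly Q [:y:]) x)"

lemma poly_as_sum_atMost:
  fixes p :: "'a::comm_semiring_1 poly"
  assumes "degree p \<le> n"
  shows "poly p x = (\<Sum>i\<le>n. coeff p i * x ^ i)"
proof -
  have "poly p x = poly (\<Sum>i\<le>n. monom (coeff p i) i) x"
    using assms by (simp add: poly_as_sum_of_monoms')
  also have "\<dots> = (\<Sum>i\<le>n. coeff p i * x ^ i)"
    by (simp only: poly_sum poly_monom)
  finally show ?thesis .
qed

lemma poly_fun2_poly2: "poly_fun2 (poly2 Q)"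
proof -
  define N where "N = degree Q + (\<Sum>j\<le>degree Q. degree (coeff Q j))"
  have deg_Q: "degree Q \<le> N"
    unfolding N_def by simp
  have deg_coeff: "degree (coeff Q j) \<le> N" for j
  proof (cases "j \<le> degree Q")
    case True
    then have "degree (coeff Q j) \<le> (\<Sum>j\<le>degree Q. degree (coeff Q j))"
      by (intro member_le_sum) auto
    then show ?thesis
      unfolding N_def by simp
  next
    case False
    then show ?thesis
      by (simp add: coeff_eq_0)
  qed
  have "poly2 Q (x, y) = (\<Sum>i\<le>N. \<Sum>j\<le>N. coeff (coeff Q j) i * x ^ i * y ^ j)" for x y
  proof -
    have "poly2 Q (x, y) = poly (\<Sum>j\<le>N. coeff Q j * [:y:] ^ j) x"
      unfolding poly2_def using poly_as_sum_atMost[OF deg_Q] by simp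
    also have "\<dots> = (\<Sum>j\<le>N. poly (coeff Q j) x * y ^ j)"
      by (simp add: poly_sum poly_power)
    also have "\<dots> = (\<Sum>j\<le>N. \<Sum>i\<le>N. coeff (coeff Q j) i * x ^ i * y ^ j)"
      by (simp add: poly_as_sum_atMost[OF deg_coeff] sum_distrib_right)
    also have "\<dots> = (\<Sum>i\<le>N. \<Sum>j\<le>N. coeff (coeff Q j) i * x ^ i * y ^ j)"
      by (rule sum.swap)
    finally show ?thesis .
  qed
  then show ?thesis
    unfolding poly_fun2_def by (intro exI[of _ N] exI[of _ "\<lambda>i j. coeff (coeff Q j) i"]) simp
qed

definition trinomial :: "nat \<Rightarrow> 'a \<Rightarrow> 'a \<Rightarrow> 'a::comm_ring_1 poly" where
  "trinomial k v w = monom 1 (Suc k) + [:w, - v:]"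

lemma poly_trinomial: "poly (trinomial k v w) t = t ^ Suc k - v * t + w"
  by (simp add: trinomial_def poly_monom)

lemma poly_pderiv_trinomial: "poly (pderiv (trinomial k v w)) t = of_nat (Suc k) * t ^ k - v"
  by (simp add: trinomial_def pderiv_add pderiv_monom pderiv_pCons poly_monom)

lemma degree_trinomial:
  assumes "k \<ge> 1"
  shows "degree (trinomial k v (w :: 'a::{comm_ring_1,ring_no_zero_divisors})) = Suc k"
  unfolding trinomial_def using assms
  by (subst degree_add_eq_left) (auto simp: degree_monom_eq)

lemma rsquarefree_trinomial:
  fixes v w :: "'a::field_char_0"
  assumes "of_nat k ^ k * v ^ Suc k \<noteq> of_nat (Suc k) ^ Suc k * w ^ k"
  shows "rsquarefree (trinomial k v w)"
  unfolding rsquarefree_roots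
proof (intro allI notI)
  fix t
  assume "poly (trinomial k v w) t = 0 \<and> poly (pderiv (trinomial k v w)) t = 0"
  then have root: "t ^ Suc k - v * t + w = 0" and v: "v = of_nat (Suc k) * t ^ k"
    by (auto simp: poly_trinomial poly_pderiv_trinomial)
  have w: "w = of_nat k * t ^ Suc k"
    using root unfolding v by (simp add: algebra_simps)
  have "of_nat k ^ k * v ^ Suc k = of_nat k ^ k * of_nat (Suc k) ^ Suc k * t ^ (k * Suc k)"
    unfolding v by (simp add: power_mult_distrib power_mult[symmetric] power_add mult.commute)
  also have "\<dots> = of_nat (Suc k) ^ Suc k * w ^ k"
    unfolding w by (simp add: power_mult_distrib power_mult[symmetric] power_add mult.commute)
  finally show False
    using assms by simp
qed

lemma card_roots_rsquarefree:
  fixes p :: "complex poly"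
  assumes "rsquarefree p"
  shows "card {z. poly p z = 0} = degree p"
proof -
  have "p \<noteq> 0"
    using assms by (simp add: rsquarefree_def)
  then have "degree p = degree (\<Prod>z | poly p z = 0. [:-z, 1:])"
    using complex_poly_decompose_rsquarefree[OF assms]
    by (metis degree_smult_eq leading_coeff_0_iff)
  also have "\<dots> = card {z. poly p z = 0}"
    by (subst degree_prod_eq_sum_degree) auto
  finally show ?thesis
    by simp
qed

lemma trinomial_nonzero_root_iff:
  fixes v w :: complex
  assumes "k \<ge> 1"
  shows "(\<exists>t. t \<noteq> 0 \<and> poly (trinomial k v w) t = 0) \<longleftrightarrow> w \<noteq> 0 \<or> v \<noteq> 0"
proof
  assume "\<exists>t. t \<noteq> 0 \<and> poly (trinomial k v w) t = 0"
  then show "w \<noteq> 0 \<or> v \<noteq> 0"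
    by (auto simp: poly_trinomial)
next
  assume "w \<noteq> 0 \<or> v \<noteq> 0"
  then consider "w \<noteq> 0" | "w = 0" "v \<noteq> 0"
    by blast
  then show "\<exists>t. t \<noteq> 0 \<and> poly (trinomial k v w) t = 0"
  proof cases
    case 1
    obtain t where "poly (trinomial k v w) t = 0"
      using fundamental_theorem_of_algebra_alt[of "trinomial k v w"]
        degree_trinomial[OF assms, of v w] by fastforce
    moreover have "t \<noteq> 0"
      using calculation \<open>w \<noteq> 0\<close> by (auto simp: poly_trinomial)
    ultimately show ?thesis
      by blast
  next
    case 2
    obtain t where "v = t ^ k"
      using exists_complex_root assms by (metis not_one_le_zero)
    then have "t \<noteq> 0" and "poly (trinomial k v w) t = 0"
      using 2 assms by (auto simp: poly_trinomial)
    then show ?thesis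
      by blast
  qed
qed

definition fk :: "nat \<Rightarrow> complex \<times> complex \<Rightarrow> complex \<times> complex" where
  "fk k = (\<lambda>(x, y). (x * y, x ^ k + (x * y - 1) * y))"

lemma poly_map2_fk: "poly_map2 (fk k)"
proof -
  let ?X = "[:[:0, 1:]:] :: complex poly poly" and ?Y = "[:0, 1:] :: complex poly poly"
  have "(\<lambda>p. fst (fk k p)) = poly2 (?X * ?Y)"
    and "(\<lambda>p. snd (fk k p)) = poly2 (?X ^ k + (?X * ?Y - 1) * ?Y)"
    by (simp_all add: fun_eq_iff fk_def poly2_def poly_power split: prod.split)
  then show ?thesis
    unfolding poly_map2_def by (simp add: poly_fun2_poly2)
qed

lemma vimage_fk:
  assumes "u \<noteq> 0"
  shows "fk k -` {(u, v)} =
    (\<lambda>t. (t, u / t)) ` {t. t \<noteq> 0 \<and> poly (trinomial k v (u * (u - 1))) t = 0}"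
proof -
  have "fk k (x, y) = (u, v) \<longleftrightarrow>
      x \<noteq> 0 \<and> y = u / x \<and> x ^ Suc k - v * x + u * (u - 1) = 0" for x y
  proof
    assume "fk k (x, y) = (u, v)"
    then have xy: "x * y = u" and "x ^ k + (u - 1) * y = v"
      by (auto simp: fk_def)
    then have "x * (x ^ k + (u - 1) * y) = x * v"
      by simp
    with xy assms show "x \<noteq> 0 \<and> y = u / x \<and> x ^ Suc k - v * x + u * (u - 1) = 0"
      by (auto simp: field_simps)
  next
    assume "x \<noteq> 0 \<and> y = u / x \<and> x ^ Suc k - v * x + u * (u - 1) = 0"
    then have "x \<noteq> 0" "y = u / x" and "x * (x ^ k + (u - 1) * y) = x * v"
      by (auto simp: field_simps)
    then show "fk k (x, y) = (u, v)"
      by (simp add: fk_def)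
  qed
  then show ?thesis
    by (auto simp: poly_trinomial)
qed

lemma range_fk:
  assumes "k \<ge> 1"
  shows "range (fk k) = - {(1, 0)}"
proof -
  have "(u, v) \<in> range (fk k) \<longleftrightarrow> (u, v) \<noteq> (1, 0)" for u v
  proof (cases "u = 0")
    case True
    have "fk k (0, - v) = (u, v)"
      using True assms by (simp add: fk_def)
    then have "(u, v) \<in> range (fk k)"
      by (metis rangeI)
    then show ?thesis
      using True by simp
  next
    case False
    have "(u, v) \<in> range (fk k) \<longleftrightarrow> fk k -` {(u, v)} \<noteq> {}"
      by (simp add: vimage_singleton_eq image_iff eq_commute set_eq_iff)
    also have "\<dots> \<longleftrightarrow> (\<exists>t. t \<noteq> 0 \<and> poly (trinomial k v (u * (u - 1))) t = 0)"
      unfolding vimage_fk[OF False] image_is_empty by blast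
    also have "\<dots> \<longleftrightarrow> u * (u - 1) \<noteq> 0 \<or> v \<noteq> 0"
      by (rule trinomial_nonzero_root_iff[OF assms])
    finally show ?thesis
      using False by simp
  qed
  then show ?thesis
    by (intro set_eqI) (metis Compl_iff singletonD singletonI surj_pair)
qed

text \<open>Its nonvanishing excludes \<open>u = 0\<close>, where the fibre is not governed by the trinomial,
  \<open>u = 1\<close>, where the root \<open>t = 0\<close> is lost, and the discriminant locus of the trinomial.\<close>
definition fk_degeneracy :: "nat \<Rightarrow> complex \<times> complex \<Rightarrow> complex" where
  "fk_degeneracy k = (\<lambda>(u, v). u * (u - 1) *
     (of_nat k ^ k * v ^ Suc k - of_nat (Suc k) ^ Suc k * (u * (u - 1)) ^ k))"

lemma poly_fun2_fk_degeneracy: "poly_fun2 (fk_degeneracy k)"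
proof -
  let ?X = "[:[:0, 1:]:] :: complex poly poly" and ?Y = "[:0, 1:] :: complex poly poly"
  let ?W = "?X * (?X - 1)"
  have "fk_degeneracy k =
      poly2 (?W * ([:[:of_nat k ^ k:]:] * ?Y ^ Suc k - [:[:of_nat (Suc k) ^ Suc k:]:] * ?W ^ k))"
    by (simp add: fun_eq_iff fk_degeneracy_def poly2_def poly_power split: prod.split)
  then show ?thesis
    by (simp add: poly_fun2_poly2)
qed

lemma fk_degeneracy_nonzero: "fk_degeneracy k \<noteq> (\<lambda>_. 0)"
proof
  assume "fk_degeneracy k = (\<lambda>_. 0)"
  then have "fk_degeneracy k (2, 0) = 0"
    by simp
  moreover have "complex_of_nat (Suc k) \<noteq> 0"
    by (simp only: of_nat_eq_0_iff)
  ultimately show False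
    by (simp add: fk_degeneracy_def)
qed

lemma card_vimage_fk:
  assumes "k \<ge> 1" and "fk_degeneracy k (u, v) \<noteq> 0"
  shows "finite (fk k -` {(u, v)})" and "card (fk k -` {(u, v)}) = k + 1"
proof -
  define P where "P = trinomial k v (u * (u - 1))"
  have "u * (u - 1) \<noteq> 0"
    and disc: "of_nat k ^ k * v ^ Suc k \<noteq> of_nat (Suc k) ^ Suc k * (u * (u - 1)) ^ k"
    using assms(2) by (auto simp: fk_degeneracy_def)
  then have "u \<noteq> 0" and "poly P 0 \<noteq> 0"
    by (auto simp: P_def poly_trinomial)
  then have "{t. t \<noteq> 0 \<and> poly P t = 0} = {t. poly P t = 0}"
    by auto
  then have fibre: "fk k -` {(u, v)} = (\<lambda>t. (t, u / t)) ` {t. poly P t = 0}"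
    using vimage_fk[OF \<open>u \<noteq> 0\<close>] unfolding P_def by simp
  have "rsquarefree P"
    unfolding P_def using disc by (rule rsquarefree_trinomial)
  then have "P \<noteq> 0" and "card {t. poly P t = 0} = k + 1"
    using card_roots_rsquarefree[of P] degree_trinomial[OF assms(1)]
    by (simp_all add: rsquarefree_def P_def)
  moreover have "inj_on (\<lambda>t. (t, u / t)) {t. poly P t = 0}"
    by (auto intro: inj_onI)
  ultimately show "finite (fk k -` {(u, v)})" and "card (fk k -` {(u, v)}) = k + 1"
    unfolding fibre by (simp_all add: poly_roots_finite card_image)
qed

theorem lemma2p7:
  fixes k :: nat
  assumes "k \<ge> 1"
  shows "\<exists>f. poly_map2 f \<and> dominant2 f \<and> generic_fiber_card f (k + 1) \<and>
           (\<exists>p. p \<in> - range f \<and> \<not> p islimpt (- range f))"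
proof (intro exI conjI)
  have range: "range (fk k) = - {(1, 0)}"
    using assms by (rule range_fk)
  show "poly_map2 (fk k)"
    by (rule poly_map2_fk)
  show "dominant2 (fk k)"
    unfolding dominant2_def range by (simp add: closure_complement)
  show "generic_fiber_card (fk k) (k + 1)"
    unfolding generic_fiber_card_def
    using poly_fun2_fk_degeneracy fk_degeneracy_nonzero card_vimage_fk[OF assms]
    by (metis surj_pair)
  show "(1, 0) \<in> - range (fk k)"
    unfolding range by simp
  show "\<not> (1, 0) islimpt (- range (fk k))"
    unfolding range by (simp add: islimpt_finite)
qed

end
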